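(* Let $\varphi(s,v)=\vec c(s)+v\vec q(s)$ be a timelike ruled surface in $\mathbb{R}^3_1$ of type $M^1_-$ or $M^1_+$, and let $\varphi^*(s,v)=\vec c(s)+R(s)\vec a(s)+v\vec q^*(s)$ be a Mannheim offset of $\varphi$. Then $\varphi$ is developable if and only if $R$ is constant.
   Context: Work in Minkowski 3-space $\mathbb{R}^3_1$, i.e. $\mathbb{R}^3$ with $\langle x,y\rangle=-x_1y_1+x_2y_2+x_3y_3$, norm $\|x\|=\sqrt{|\langle x,x\rangle|}$, and Lorentzian cross product $x\times y=(x_2y_3-x_3y_2,\,x_1y_3-x_3y_1,\,x_2y_1-x_1y_2)$. A ruled surface is $\varphi(s,v)=\vec c(s)+v\vec q(s)$, where $\vec q$ is a unit non-null vector field with $\langle\vec q,\vec q\rangle=\varepsilon_2\in\{\pm1\}$, $d\vec q/ds$ is non-null, and the base curve $\vec c$ is the striction curve, i.e. $\langle d\vec q/ds,d\vec c/ds\rangle=0$; $s$ is the arc-length parameter of $\vec c$. Its Frenet frame is $\{\vec q,\vec h,\vec a\}$ with central normal $\vec h=\frac{d\vec q/ds}{\|d\vec q/ds\|}$ and asymptotic normal $\vec a=\frac{(d\vec q/ds)\times\vec q}{\|d\vec q/ds\|}$ (all assumed non-null). The surface is of type $M^1_-$ if $\vec q$ is timelike and $\vec h$ spacelike; of type $M^1_+$ if $\vec q$ and $\vec h$ are both spacelike (these two types are timelike surfaces); of type $M^2_+$ if $\vec h$ is timelike and $\vec q$, $d\vec q/ds$ are spacelike (a spacelike surface). The distribution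 parameter is $d_\varphi=\det(d\vec c/ds,\vec q,d\vec q/ds)/\langle d\vec q/ds,d\vec q/ds\rangle$, and $\varphi$ is called developable iff $d_\varphi\equiv 0$. A ruled surface $\varphi^*(s,v)=\vec c^*(s)+v\vec q^*(s)$, with striction curve $\vec c^*$ and Frenet frame $\{\vec q^*,\vec h^*,\vec a^*\}$ defined in the same way, is a Mannheim offset of the timelike ruled surface $\varphi$ if there is a one-to-one correspondence between their rulings such that $\vec h^*=\vec a$ (the asymptotic normal of $\varphi$ is the central normal of $\varphi^*$); in this case $\vec c^*(s)=\vec c(s)+R(s)\vec a(s)$ for a scalar function $R$. *)

theory Defs
  imports "HOL-Analysis.Analysis"
begin

definition linner :: "real^3 \<Rightarrow> real^3 \<Rightarrow> real" where
  "linner x y = - x$1 * y$1 + x$2 * y$2 + x$3 * y$3"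

definition lnorm :: "real^3 \<Rightarrow> real" where
  "lnorm x = sqrt \<bar>linner x x\<bar>"

definition lcross :: "real^3 \<Rightarrow> real^3 \<Rightarrow> real^3" where
  "lcross x y = vector [x$2 * y$3 - x$3 * y$2, x$1 * y$3 - x$3 * y$1, x$2 * y$1 - x$1 * y$2]"

definition spacelike :: "real^3 \<Rightarrow> bool" where
  "spacelike x \<longleftrightarrow> linner x x > 0"

definition timelike :: "real^3 \<Rightarrow> bool" where
  "timelike x \<longleftrightarrow> linner x x < 0"

definition non_null :: "real^3 \<Rightarrow> bool" where
  "non_null x \<longleftrightarrow> linner x x \<noteq> 0"

definition det3 :: "real^3 \<Rightarrow> real^3 \<Rightarrow> real^3 \<Rightarrow> real" where
  "det3 x y z = det (vector [x, y, z] :: real^3^3)"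

definition ruled_surface :: "(real \<Rightarrow> real^3) \<Rightarrow> (real \<Rightarrow> real^3) \<Rightarrow> real \<times> real \<Rightarrow> real^3" where
  "ruled_surface c q = (\<lambda>(s, v). c s + v *\<^sub>R q s)"

abbreviation dds :: "(real \<Rightarrow> real^3) \<Rightarrow> real \<Rightarrow> real^3" where
  "dds f s \<equiv> vector_derivative f (at s)"

definition central_normal :: "(real \<Rightarrow> real^3) \<Rightarrow> real \<Rightarrow> real^3" where
  "central_normal q s = (1 / lnorm (dds q s)) *\<^sub>R dds q s"

definition asymptotic_normal :: "(real \<Rightarrow> real^3) \<Rightarrow> real \<Rightarrow> real^3" where
  "asymptotic_normal q s = (1 / lnorm (dds q s)) *\<^sub>R lcross (dds q s) (q s)"

definition distribution_parameter :: "(real \<Rightarrow> real^3) \<Rightarrow> (real \<Rightarrow> real^3) \<Rightarrow> real \<Rightarrow> real" where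
  "distribution_parameter c q s = det3 (dds c s) (q s) (dds q s) / linner (dds q s) (dds q s)"

definition developable :: "real set \<Rightarrow> (real \<Rightarrow> real^3) \<Rightarrow> (real \<Rightarrow> real^3) \<Rightarrow> bool" where
  "developable I c q \<longleftrightarrow> (\<forall>s\<in>I. distribution_parameter c q s = 0)"

text \<open>A ruled surface \<open>c + v q\<close> over the parameter set \<open>I\<close> whose base curve \<open>c\<close> is the
  striction curve, with \<open>q\<close> a unit non-null ruling field, \<open>dq/ds\<close> non-null and non-null
  Frenet frame (arc length is not part of this predicate).\<close>
definition striction_ruled :: "real set \<Rightarrow> (real \<Rightarrow> real^3) \<Rightarrow> (real \<Rightarrow> real^3) \<Rightarrow> bool" where
  "striction_ruled I c q \<longleftrightarrow>
     (\<exists>\<epsilon>\<in>{1, -1}. \<forall>s\<in>I. linner (q s) (q s) = \<epsilon>) \<and>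
     (\<forall>s\<in>I. c differentiable (at s) \<and> q differentiable (at s) \<and>
        non_null (dds q s) \<and>
        linner (dds q s) (dds c s) = 0 \<and>
        non_null (central_normal q s) \<and> non_null (asymptotic_normal q s))"

definition base_ruled_surface :: "real set \<Rightarrow> (real \<Rightarrow> real^3) \<Rightarrow> (real \<Rightarrow> real^3) \<Rightarrow> bool" where
  "base_ruled_surface I c q \<longleftrightarrow> striction_ruled I c q \<and>
     (\<forall>s\<in>I. lnorm (dds c s) = 1 \<and> (\<lambda>t. dds q t) differentiable (at s))"

definition type_M1_minus :: "real set \<Rightarrow> (real \<Rightarrow> real^3) \<Rightarrow> bool" where
  "type_M1_minus I q \<longleftrightarrow> (\<forall>s\<in>I. timelike (q s) \<and> spacelike (central_normal q s))"

definition type_M1_plus :: "real set \<Rightarrow> (real \<Rightarrow> real^3) \<Rightarrow> bool" where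
  "type_M1_plus I q \<longleftrightarrow> (\<forall>s\<in>I. spacelike (q s) \<and> spacelike (central_normal q s))"

text \<open>\<open>\<phi>*(s,v) = c(s) + R(s) a(s) + v q*(s)\<close> is a Mannheim offset of \<open>\<phi> = c + v q\<close>:
  its base curve \<open>c* = c + R a\<close> is its striction curve and \<open>h* = a\<close>.\<close>
definition mannheim_offset :: "real set \<Rightarrow> (real \<Rightarrow> real^3) \<Rightarrow> (real \<Rightarrow> real^3) \<Rightarrow>
    (real \<Rightarrow> real) \<Rightarrow> (real \<Rightarrow> real^3) \<Rightarrow> bool" where
  "mannheim_offset I c q R qs \<longleftrightarrow>
     striction_ruled I (\<lambda>s. c s + R s *\<^sub>R asymptotic_normal q s) qs \<and>
     (\<forall>s\<in>I. central_normal qs s = asymptotic_normal q s)"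

end

theory Submission
  imports Defs
begin

text \<open>Along \<open>\<phi>\<close> the asymptotic normal \<open>a\<close> has constant square \<open>-\<epsilon>\<close>, and the distribution
  parameter is \<open>\<langle>c', a\<rangle> / \<parallel>q'\<parallel>\<close>. For the offset, \<open>q*'\<close> is parallel to \<open>h* = a\<close>, so the
  striction condition of \<open>\<phi>*\<close> says \<open>c*' = c' + R' a + R a'\<close> is orthogonal to \<open>a\<close>; since
  \<open>\<langle>a, a'\<rangle> = 0\<close> this gives \<open>\<langle>c', a\<rangle> = \<epsilon> R'\<close>. Hence \<open>d\<^sub>\<phi>\<close> vanishes exactly where \<open>R'\<close> does,
  and on a connected open parameter set \<open>R' \<equiv> 0\<close> means \<open>R\<close> is constant.\<close>

lemma bounded_bilinear_linner: "bounded_bilinear linner"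
  unfolding bilinear_conv_bounded_bilinear[symmetric] bilinear_def linear_iff
  by (auto simp: linner_def algebra_simps)

lemma bounded_bilinear_lcross: "bounded_bilinear lcross"
  unfolding bilinear_conv_bounded_bilinear[symmetric] bilinear_def linear_iff
  by (auto simp: lcross_def vec_eq_iff vector_def forall_3 algebra_simps)

lemma linner_commute: "linner x y = linner y x"
  by (simp add: linner_def algebra_simps)

lemma linner_scaleR_left [simp]: "linner (r *\<^sub>R x) y = r * linner x y"
  and linner_scaleR_right [simp]: "linner x (r *\<^sub>R y) = r * linner x y"
  by (simp_all add: linner_def algebra_simps)

lemma linner_add_left [simp]: "linner (x + y) z = linner x z + linner y z"
  and linner_add_right [simp]: "linner z (x + y) = linner z x + linner z y"
  by (simp_all add: linner_def algebra_simps)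

lemma det3_eq_linner_lcross: "det3 x y z = linner x (lcross z y)"
  by (simp add: det3_def det_3 linner_def lcross_def vector_def algebra_simps)

lemma linner_lcross_self:
  "linner (lcross x y) (lcross x y) = (linner x y)\<^sup>2 - linner x x * linner y y"
  by (simp add: linner_def lcross_def vector_def power2_eq_square algebra_simps)

lemma spacelike_of_spacelike_central_normal:
  assumes "spacelike (central_normal q s)"
  shows "spacelike (dds q s)"
  using assms zero_le_square[of "lnorm (dds q s)"]
  by (auto simp: spacelike_def central_normal_def zero_less_divide_iff)

lemma lnorm_spacelike: "spacelike x \<Longrightarrow> lnorm x = sqrt (linner x x)"
  by (simp add: lnorm_def spacelike_def)

lemma has_vector_derivative_linner:
  assumes "(f has_vector_derivative f') (at s)" "(g has_vector_derivative g') (at s)"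
  shows "((\<lambda>t. linner (f t) (g t)) has_vector_derivative linner (f s) g' + linner f' (g s)) (at s)"
  using bounded_bilinear.has_vector_derivative[OF bounded_bilinear_linner assms] .

lemma has_vector_derivative_constant_on_open:
  fixes f :: "real \<Rightarrow> 'a::real_normed_vector"
  assumes "open I" "s \<in> I" "\<And>t. t \<in> I \<Longrightarrow> f t = k" "(f has_vector_derivative f') (at s)"
  shows "f' = 0"
proof -
  have "(f has_vector_derivative 0) (at s)"
    by (rule has_vector_derivative_transform_within_open[of "\<lambda>t. k" _ _ I]) (use assms in auto)
  then show ?thesis
    using assms(4) vector_derivative_unique_at by blast
qed

lemma linner_derivative_eq_0_of_constant_square:
  assumes "open I" "s \<in> I" "\<And>t. t \<in> I \<Longrightarrow> linner (f t) (f t) = k"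
    and "(f has_vector_derivative f') (at s)"
  shows "linner (f s) f' = 0"
proof -
  have "linner (f s) f' + linner f' (f s) = 0"
    by (rule has_vector_derivative_constant_on_open[OF assms(1,2)
          _ has_vector_derivative_linner[OF assms(4,4)]])
      (use assms(3) in auto)
  then show ?thesis
    by (simp add: linner_commute)
qed

lemma deriv_eq_0_iff_constant_on:
  fixes R :: "real \<Rightarrow> real"
  assumes "open I" "connected I" "\<forall>s\<in>I. R differentiable (at s)"
  shows "(\<forall>s\<in>I. deriv R s = 0) \<longleftrightarrow> (\<exists>k. \<forall>s\<in>I. R s = k)"
proof -
  have R': "(R has_real_derivative deriv R s) (at s)" if "s \<in> I" for s
    using assms(3) that by (simp add: DERIV_deriv_iff_real_differentiable)
  show ?thesis
  proof
    assume "\<forall>s\<in>I. deriv R s = 0"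
    then have "R constant_on I"
      using R' by (intro has_field_derivative_0_imp_constant_on[OF _ assms(2,1)]) force
    then show "\<exists>k. \<forall>s\<in>I. R s = k"
      unfolding constant_on_def by blast
  next
    assume "\<exists>k. \<forall>s\<in>I. R s = k"
    then obtain k where "\<forall>s\<in>I. R s = k" by blast
    then show "\<forall>s\<in>I. deriv R s = 0"
      using R' assms(1) has_vector_derivative_constant_on_open[of I _ R k]
      by (auto simp: has_real_derivative_iff_has_vector_derivative)
  qed
qed

lemma linner_asymptotic_normal_self:
  assumes "linner (q s) (q s) = \<epsilon>" "linner (q s) (dds q s) = 0" "spacelike (dds q s)"
  shows "linner (asymptotic_normal q s) (asymptotic_normal q s) = - \<epsilon>"
  using assms
  by (simp add: asymptotic_normal_def lnorm_spacelike linner_lcross_self linner_commute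
      spacelike_def power2_eq_square)

lemma distribution_parameter_eq_linner_asymptotic_normal:
  assumes "spacelike (dds q s)"
  shows "distribution_parameter c q s = linner (dds c s) (asymptotic_normal q s) / lnorm (dds q s)"
proof -
  have "lnorm (dds q s) * lnorm (dds q s) = linner (dds q s) (dds q s)"
    using assms by (simp add: lnorm_spacelike spacelike_def)
  then show ?thesis
    by (simp add: distribution_parameter_def det3_eq_linner_lcross asymptotic_normal_def
        divide_divide_eq_left)
qed

text \<open>On \<open>I\<close> the factor \<open>1 / lnorm q'\<close> is \<open>1 / sqrt \<langle>q', q'\<rangle>\<close>, which is smooth because \<open>q'\<close> stays spacelike.\<close>
lemma asymptotic_normal_differentiable:
  assumes "open I" "s \<in> I" "\<forall>t\<in>I. spacelike (dds q t)"
    and "q differentiable (at s)" "(\<lambda>t. dds q t) differentiable (at s)"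
  shows "asymptotic_normal q differentiable (at s)"
proof -
  define Q where "Q = (\<lambda>t. dds q t)"
  obtain Q' where Q': "(Q has_vector_derivative Q') (at s)"
    using assms(5) unfolding Q_def by (auto simp: vector_derivative_works)
  have q': "(q has_vector_derivative Q s) (at s)"
    using assms(4) unfolding Q_def by (simp add: vector_derivative_works[symmetric])
  have QQ: "((\<lambda>t. linner (Q t) (Q t)) has_real_derivative linner (Q s) Q' + linner Q' (Q s)) (at s)"
    using has_vector_derivative_linner[OF Q' Q']
    by (simp add: has_real_derivative_iff_has_vector_derivative)
  have "linner (Q s) (Q s) > 0"
    using assms(2,3) by (simp add: Q_def spacelike_def)
  then have "\<exists>A. ((\<lambda>t. (1 / sqrt (linner (Q t) (Q t))) *\<^sub>R lcross (Q t) (q t))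
      has_vector_derivative A) (at s)"
    using QQ bounded_bilinear.has_vector_derivative[OF bounded_bilinear_lcross Q' q']
    by (auto intro!: derivative_eq_intros)
  then obtain A where
    A: "((\<lambda>t. (1 / sqrt (linner (Q t) (Q t))) *\<^sub>R lcross (Q t) (q t)) has_vector_derivative A) (at s)"
    by blast
  have "(asymptotic_normal q has_vector_derivative A) (at s)"
    by (rule has_vector_derivative_transform_within_open[OF A assms(1,2)])
      (use assms(3) in \<open>simp add: asymptotic_normal_def Q_def lnorm_spacelike\<close>)
  then show ?thesis
    unfolding differentiable_def has_vector_derivative_def by blast
qed

text \<open>The central normal of the offset is \<open>a\<close>, so \<open>q*'\<close> is a nonzero multiple of \<open>a\<close> and the
  striction condition of \<open>\<phi>*\<close> becomes orthogonality of \<open>c*'\<close> to \<open>a\<close>.\<close>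
lemma mannheim_offset_striction_orthogonal:
  assumes "mannheim_offset I c q R qs" "s \<in> I"
  shows "linner (asymptotic_normal q s) (dds (\<lambda>t. c t + R t *\<^sub>R asymptotic_normal q t) s) = 0"
proof -
  define l where "l = lnorm (dds qs s)"
  have orth: "linner (dds qs s) (dds (\<lambda>t. c t + R t *\<^sub>R asymptotic_normal q t) s) = 0"
    and nn: "non_null (dds qs s)" and h: "central_normal qs s = asymptotic_normal q s"
    using assms unfolding mannheim_offset_def striction_ruled_def by auto
  have "l \<noteq> 0"
    using nn by (simp add: l_def lnorm_def non_null_def)
  moreover have "dds qs s = l *\<^sub>R asymptotic_normal q s"
    using arg_cong[OF h, of "scaleR l"] \<open>l \<noteq> 0\<close> by (simp add: central_normal_def l_def)
  ultimately show ?thesis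
    using orth by simp
qed

lemma linner_derivative_asymptotic_normal_eq:
  assumes I: "open I" "s \<in> I"
    and eps: "\<forall>t\<in>I. linner (q t) (q t) = \<epsilon>"
    and q: "\<forall>t\<in>I. q differentiable (at t)" "(\<lambda>t. dds q t) differentiable (at s)"
    and sp: "\<forall>t\<in>I. spacelike (dds q t)"
    and c: "c differentiable (at s)"
    and R: "(R has_real_derivative R') (at s)"
    and mo: "mannheim_offset I c q R qs"
  shows "linner (dds c s) (asymptotic_normal q s) = \<epsilon> * R'"
proof -
  define a where "a = asymptotic_normal q"
  have q_orth: "linner (q t) (dds q t) = 0" if "t \<in> I" for t
    using linner_derivative_eq_0_of_constant_square[OF I(1) that, of q \<epsilon>] eps q(1) that
    by (simp add: vector_derivative_works[symmetric])
  have aa: "linner (a t) (a t) = - \<epsilon>" if "t \<in> I" for t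
    using linner_asymptotic_normal_self[OF _ q_orth] eps sp that by (simp add: a_def)
  obtain A where A: "(a has_vector_derivative A) (at s)"
    using asymptotic_normal_differentiable[OF I sp] q I(2)
    by (auto simp: a_def vector_derivative_works)
  have aA: "linner (a s) A = 0"
    by (rule linner_derivative_eq_0_of_constant_square[OF I _ A]) (use aa in auto)
  have "((\<lambda>t. c t + R t *\<^sub>R a t) has_vector_derivative dds c s + (R s *\<^sub>R A + R' *\<^sub>R a s)) (at s)"
    using c R A by (auto simp: vector_derivative_works[symmetric] intro!: derivative_eq_intros)
  then have "linner (a s) (dds c s + (R s *\<^sub>R A + R' *\<^sub>R a s)) = 0"
    using mannheim_offset_striction_orthogonal[OF mo I(2)] by (simp add: a_def vector_derivative_at)
  then show ?thesis
    using aA aa[OF I(2)] by (simp add: a_def linner_commute)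
qed

theorem theorem4p1:
  fixes I :: "real set" and c q qs :: "real \<Rightarrow> real^3" and R :: "real \<Rightarrow> real"
  assumes "open I" and "connected I"
    and "base_ruled_surface I c q"
    and "type_M1_minus I q \<or> type_M1_plus I q"
    and "\<forall>s\<in>I. R differentiable (at s)"
    and "mannheim_offset I c q R qs"
  shows "developable I c q \<longleftrightarrow> (\<exists>k. \<forall>s\<in>I. R s = k)"
proof -
  obtain \<epsilon> where \<epsilon>: "\<epsilon> \<in> {1, -1}" "\<forall>t\<in>I. linner (q t) (q t) = \<epsilon>"
    using assms(3) unfolding base_ruled_surface_def striction_ruled_def by blast
  have sp: "\<forall>t\<in>I. spacelike (dds q t)"
    using assms(4) spacelike_of_spacelike_central_normal
    unfolding type_M1_minus_def type_M1_plus_def by blast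
  have "distribution_parameter c q s = 0 \<longleftrightarrow> deriv R s = 0" if s: "s \<in> I" for s
  proof -
    have "linner (dds c s) (asymptotic_normal q s) = \<epsilon> * deriv R s"
      using assms s sp \<epsilon>(2)
      by (intro linner_derivative_asymptotic_normal_eq[of I])
        (auto simp: base_ruled_surface_def striction_ruled_def DERIV_deriv_iff_real_differentiable)
    moreover have "lnorm (dds q s) > 0"
      using sp s by (simp add: lnorm_spacelike spacelike_def)
    ultimately show ?thesis
      using \<epsilon>(1) sp s by (auto simp: distribution_parameter_eq_linner_asymptotic_normal)
  qed
  then have "developable I c q \<longleftrightarrow> (\<forall>s\<in>I. deriv R s = 0)"
    unfolding developable_def by auto
  also have "\<dots> \<longleftrightarrow> (\<exists>k. \<forall>s\<in>I. R s = k)"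
    using deriv_eq_0_iff_constant_on[OF assms(1,2,5)] .
  finally show ?thesis .
qed

end
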